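(* Consider the CoDGraD iteration described below. Assume that ${\bf A}_{\rm sde}$ has $1$ as a simple eigenvalue and all other eigenvalues in the open unit disk, and that there is $L>0$ with $\|\nabla g_i({\bf x})-\nabla g_i({\bf y})\|_2\le L\|{\bf x}-{\bf y}\|_2$ for all ${\bf x},{\bf y}\in\mathbb{R}^N$, $1\le i\le n$. Then for every $k\ge0$, $$\Big\|\sum_{i=1}^n(a_i-a_{n+i})\nabla g_i({\bf x}_i(k))-\tilde w\,\nabla f(\bar{\bf x}(k))\Big\|_2\le L\Big(\sum_{i=1}^{2n}|a_i|\Big)\max_{1\le i\le n}\|{\bf x}_i(k)-\bar{\bf x}(k)\|_2.$$
   Context: Setting: $f_1,\dots,f_m:\mathbb{R}^N\to\mathbb{R}$, $f=\sum_l f_l$; ${\bf B}=(b(i,l))$ real $n\times m$, ${\bf A}=(a(i,j))$ real $n\times n$ with ${\bf A}{\bf B}={\bf 1}_{n\times m}$ (all-ones); $g_i=\sum_l b(i,l)f_l$ differentiable (so $f=\sum_j a(i,j)g_j$ for each $i$). Let $t_+=\max(t,0)$, $w_i=\big(\sum_j|a(i,j)|\big)^{-1}$, $\tilde a(i,j)=w_ia(i,j)$, $\tilde{\bf A}_\pm=\big((\pm\tilde a(i,j))_+\big)$, ${\bf A}_{\rm sde}=\begin{pmatrix}\tilde{\bf A}_+&\tilde{\bf A}_-\\ \tilde{\bf A}_+&\tilde{\bf A}_-\end{pmatrix}$. CoDGraD iteration: positive step sizes $\alpha_k$, arbitrary ${\bf x}_i(0)\in\mathbb{R}^N$, and for $k\ge0$: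 ${\bf y}_i^\pm(k)={\bf x}_i(k)\mp\alpha_k\nabla g_i({\bf x}_i(k))$, ${\bf x}_i(k+1)=\sum_{j=1}^n w_i\{(a(i,j))_+{\bf y}_j^+(k)+(-a(i,j))_+{\bf y}_j^-(k)\}$. Let ${\bf a}_{\rm sde}=(a_1,\dots,a_{2n})^T$ be the unique vector with ${\bf a}_{\rm sde}^T{\bf A}_{\rm sde}={\bf a}_{\rm sde}^T$ and $\sum_i a_i=1$; $\bar{\bf x}(k)=\sum_{i=1}^n(a_i+a_{n+i}){\bf x}_i(k)$; $\tilde w=\sum_{i=1}^n(a_i+a_{n+i})w_i$. *)

theory Defs
  imports "HOL-Analysis.Analysis" "Jordan_Normal_Form.Determinant" "Jordan_Normal_Form.Char_Poly"
begin

text \<open>Indices are 0-based: i,j < n, l < m, p,q < 2n. Matrices are functions nat => nat => real.\<close>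

definition pos_part :: "real \<Rightarrow> real" where
  "pos_part t = max t 0"

definition wgt :: "nat \<Rightarrow> (nat \<Rightarrow> nat \<Rightarrow> real) \<Rightarrow> nat \<Rightarrow> real" where
  "wgt n A i = inverse (\<Sum>j<n. \<bar>A i j\<bar>)"

text \<open>The 2n x 2n matrix A_sde = [[A~+, A~-],[A~+, A~-]] with A~+- = ((+- w_i a(i,j))_+).\<close>
definition A_sde :: "nat \<Rightarrow> (nat \<Rightarrow> nat \<Rightarrow> real) \<Rightarrow> nat \<Rightarrow> nat \<Rightarrow> real" where
  "A_sde n A p q =
     (let i = p mod n in
      if q < n then pos_part (wgt n A i * A i q)
      else pos_part (- (wgt n A i * A i (q - n))))"

definition A_sde_mat :: "nat \<Rightarrow> (nat \<Rightarrow> nat \<Rightarrow> real) \<Rightarrow> complex Matrix.mat" where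
  "A_sde_mat n A = Matrix.mat (2*n) (2*n) (\<lambda>(p,q). complex_of_real (A_sde n A p q))"

definition grad :: "('v::euclidean_space \<Rightarrow> real) \<Rightarrow> 'v \<Rightarrow> 'v" where
  "grad h x = (THE D. GDERIV h x :> D)"

end

theory Submission
  imports Defs
begin

text \<open>The two block rows of \<open>A_sde\<close> coincide, and the positive and negative parts of
  \<open>w_i a(i,q)\<close> differ by \<open>w_i a(i,q)\<close>. Hence the two halves of any left fixed vector of
  \<open>A_sde\<close> satisfy \<open>a_q - a_{n+q} = \<Sum>_i (a_i + a_{n+i}) w_i a(i,q)\<close>. Since \<open>AB = 1\<close> gives
  \<open>f = \<Sum>_q a(i,q) g_q\<close> for every row \<open>i\<close>, this turns \<open>\<Sum>_q (a_q - a_{n+q}) \<nabla>g_q(xbar)\<close>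
  into \<open>w~ \<nabla>f(xbar)\<close>, and the bound follows from the Lipschitz continuity of each \<open>\<nabla>g_i\<close>.
  Only this identity is used: the estimate holds for arbitrary points \<open>x_i(k)\<close>, without the
  spectral hypotheses, the normalisation of \<open>a\<close>, or the iteration.\<close>

lemma GDERIV_unique:
  assumes "GDERIV h x :> D" and "GDERIV h x :> D'"
  shows "D = D'"
proof -
  have "(\<lambda>v. inner v D) = (\<lambda>v. inner v D')"
    using has_derivative_unique assms unfolding gderiv_def by blast
  then have "\<forall>v. inner v D = inner v D'"
    by (simp add: fun_eq_iff)
  then show ?thesis
    by (simp add: vector_eq_ldot)
qed

lemma grad_eqI:
  assumes "GDERIV h x :> D"
  shows "grad h x = D"
  unfolding grad_def by (rule the_equality) (rule assms, rule GDERIV_unique[OF _ assms])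

lemma GDERIV_grad:
  fixes h :: "'v::euclidean_space \<Rightarrow> real"
  assumes "h differentiable (at x)"
  shows "GDERIV h x :> grad h x"
proof -
  obtain h' where h': "(h has_derivative h') (at x)"
    using assms differentiable_def by blast
  define D where "D = (\<Sum>b\<in>Basis. h' b *\<^sub>R b)"
  have "h' v = inner v D" for v
  proof -
    have "h' v = h' (\<Sum>b\<in>Basis. inner v b *\<^sub>R b)"
      by (simp add: euclidean_representation)
    also have "\<dots> = (\<Sum>b\<in>Basis. inner v b * h' b)"
      using has_derivative_linear[OF h'] by (simp add: linear_sum linear_scale)
    also have "\<dots> = inner v D"
      by (simp add: D_def inner_sum_right mult.commute)
    finally show ?thesis .
  qed
  then have "h' = (\<lambda>v. inner v D)"
    by (rule ext)
  then have "GDERIV h x :> D"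
    unfolding gderiv_def using h' by simp
  then show ?thesis
    by (simp add: grad_eqI)
qed

lemma grad_sum:
  fixes h :: "'i \<Rightarrow> 'v::euclidean_space \<Rightarrow> real"
  assumes "finite I" and "\<And>i. i \<in> I \<Longrightarrow> h i differentiable (at x)"
  shows "grad (\<lambda>z. \<Sum>i\<in>I. c i * h i z) x = (\<Sum>i\<in>I. c i *\<^sub>R grad (h i) x)"
proof (rule grad_eqI)
  have "((\<lambda>z. \<Sum>i\<in>I. c i * h i z) has_derivative (\<lambda>v. \<Sum>i\<in>I. c i * inner v (grad (h i) x))) (at x)"
    using GDERIV_grad[OF assms(2)] unfolding gderiv_def
    by (intro has_derivative_sum has_derivative_mult_right)
  then show "GDERIV (\<lambda>z. \<Sum>i\<in>I. c i * h i z) x :> (\<Sum>i\<in>I. c i *\<^sub>R grad (h i) x)"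
    unfolding gderiv_def by (simp add: inner_sum_right)
qed

lemma sum_lessThan_double:
  fixes F :: "nat \<Rightarrow> 'a::comm_monoid_add"
  shows "(\<Sum>p<2*n. F p) = (\<Sum>i<n. F i) + (\<Sum>i<n. F (n+i))"
proof -
  have "(\<Sum>p<2*n. F p) = sum F {0..<n} + sum F {0+n..<n+n}"
    by (simp add: lessThan_atLeast0 mult_2 sum.atLeastLessThan_concat)
  also have "sum F {0+n..<n+n} = (\<Sum>i\<in>{0..<n}. F (i+n))"
    by (rule sum.shift_bounds_nat_ivl)
  finally show ?thesis
    by (simp add: lessThan_atLeast0 add.commute)
qed

lemma sum_eq_row_combination:
  fixes F :: "nat \<Rightarrow> 'a::comm_semiring_1"
  assumes "\<And>l. l < m \<Longrightarrow> (\<Sum>j<n. A j * B j l) = 1"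
  shows "(\<Sum>l<m. F l) = (\<Sum>j<n. A j * (\<Sum>l<m. B j l * F l))"
proof -
  have "(\<Sum>j<n. A j * (\<Sum>l<m. B j l * F l)) = (\<Sum>j<n. \<Sum>l<m. A j * B j l * F l)"
    by (simp add: sum_distrib_left mult.assoc)
  also have "\<dots> = (\<Sum>l<m. \<Sum>j<n. A j * B j l * F l)"
    by (rule sum.swap)
  also have "\<dots> = (\<Sum>l<m. F l)"
    using assms by (simp add: sum_distrib_right[symmetric])
  finally show ?thesis ..
qed

lemma pos_part_diff: "pos_part t - pos_part (- t) = t"
  unfolding pos_part_def by auto

lemma A_sde_column_diff:
  assumes "q < n"
  shows "A_sde n A p q - A_sde n A p (n+q) = wgt n A (p mod n) * A (p mod n) q"
  using assms pos_part_diff by (simp add: A_sde_def Let_def)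

lemma A_sde_left_fixed_halves_diff:
  assumes fixed: "\<forall>q<2*n. (\<Sum>p<2*n. a p * A_sde n A p q) = a q" and "q < n"
  shows "a q - a (n+q) = (\<Sum>i<n. (a i + a (n+i)) * wgt n A i * A i q)"
proof -
  have "a q - a (n+q) = (\<Sum>p<2*n. a p * (A_sde n A p q - A_sde n A p (n+q)))"
    using fixed \<open>q < n\<close> by (simp add: right_diff_distrib sum_subtractf)
  also have "\<dots> = (\<Sum>p<2*n. a p * (wgt n A (p mod n) * A (p mod n) q))"
    using \<open>q < n\<close> by (simp add: A_sde_column_diff)
  also have "\<dots> = (\<Sum>i<n. a i * (wgt n A i * A i q)) + (\<Sum>i<n. a (n+i) * (wgt n A i * A i q))"
    unfolding sum_lessThan_double by (intro arg_cong2[where f="(+)"] sum.cong) simp_all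
  also have "\<dots> = (\<Sum>i<n. (a i + a (n+i)) * wgt n A i * A i q)"
    by (simp add: sum.distrib[symmetric] algebra_simps)
  finally show ?thesis .
qed

lemma sum_scaleR_column_combination:
  fixes G :: "nat \<Rightarrow> 'a::real_vector"
  assumes rows: "\<And>i. i < n \<Longrightarrow> F = (\<Sum>q<n. A i q *\<^sub>R G q)"
    and coeffs: "\<And>q. q < n \<Longrightarrow> d q = (\<Sum>i<n. c i * A i q)"
  shows "(\<Sum>q<n. d q *\<^sub>R G q) = (\<Sum>i<n. c i) *\<^sub>R F"
proof -
  have "(\<Sum>q<n. d q *\<^sub>R G q) = (\<Sum>q<n. \<Sum>i<n. c i *\<^sub>R A i q *\<^sub>R G q)"
    by (simp add: coeffs scaleR_sum_left)
  also have "\<dots> = (\<Sum>i<n. c i *\<^sub>R (\<Sum>q<n. A i q *\<^sub>R G q))"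
    by (subst sum.swap) (simp add: scaleR_sum_right)
  also have "\<dots> = (\<Sum>i<n. c i *\<^sub>R F)"
    using rows by simp
  finally show ?thesis
    by (simp add: scaleR_sum_left)
qed

lemma norm_sum_scaleR_le_Max:
  fixes u :: "nat \<Rightarrow> 'a::real_normed_vector"
  assumes "\<And>i. i < n \<Longrightarrow> norm (u i) \<le> L * r i" and "0 \<le> L"
  shows "norm (\<Sum>i<n. d i *\<^sub>R u i) \<le> (\<Sum>i<n. \<bar>d i\<bar>) * (L * (MAX i\<in>{..<n}. r i))"
proof -
  have "norm (\<Sum>i<n. d i *\<^sub>R u i) \<le> (\<Sum>i<n. \<bar>d i\<bar> * norm (u i))"
    by (rule order_trans[OF norm_sum]) simp
  also have "\<dots> \<le> (\<Sum>i<n. \<bar>d i\<bar> * (L * (MAX i\<in>{..<n}. r i)))"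
  proof (rule sum_mono)
    fix i assume "i \<in> {..<n}"
    then have "r i \<le> (MAX i\<in>{..<n}. r i)"
      by simp
    then have "norm (u i) \<le> L * (MAX i\<in>{..<n}. r i)"
      using assms \<open>i \<in> {..<n}\<close> by (meson lessThan_iff mult_left_mono order_trans)
    then show "\<bar>d i\<bar> * norm (u i) \<le> \<bar>d i\<bar> * (L * (MAX i\<in>{..<n}. r i))"
      by (simp add: mult_left_mono)
  qed
  finally show ?thesis
    by (simp add: sum_distrib_right)
qed

theorem proposition5:
  fixes n m :: nat
    and fl :: "nat \<Rightarrow> 'v::euclidean_space \<Rightarrow> real"
    and B A :: "nat \<Rightarrow> nat \<Rightarrow> real"
    and \<alpha> :: "nat \<Rightarrow> real"
    and x :: "nat \<Rightarrow> nat \<Rightarrow> 'v"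
    and a :: "nat \<Rightarrow> real"
    and L :: real
  defines "f \<equiv> (\<lambda>z. \<Sum>l<m. fl l z)"
    and "g \<equiv> (\<lambda>i z. \<Sum>l<m. B i l * fl l z)"
  assumes n_pos: "0 < n" and m_pos: "0 < m"
    and AB: "\<forall>i<n. \<forall>l<m. (\<Sum>j<n. A i j * B j l) = 1"
    and g_diff: "\<forall>i<n. \<forall>z. g i differentiable (at z)"
    and simple_one: "order 1 (char_poly (A_sde_mat n A)) = 1"
    and others_in_disk: "\<forall>z. poly (char_poly (A_sde_mat n A)) z = 0 \<longrightarrow> z \<noteq> 1 \<longrightarrow> cmod z < 1"
    and L_pos: "0 < L"
    and Lip: "\<forall>i<n. \<forall>y z. norm (grad (g i) y - grad (g i) z) \<le> L * norm (y - z)"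
    and step_pos: "\<forall>k. 0 < \<alpha> k"
    and iter: "\<forall>k. \<forall>i<n. x (Suc k) i =
        (\<Sum>j<n. wgt n A i *\<^sub>R
           (pos_part (A i j) *\<^sub>R (x k j - \<alpha> k *\<^sub>R grad (g j) (x k j))
            + pos_part (- A i j) *\<^sub>R (x k j + \<alpha> k *\<^sub>R grad (g j) (x k j))))"
    and a_left: "\<forall>q<2*n. (\<Sum>p<2*n. a p * A_sde n A p q) = a q"
    and a_sum: "(\<Sum>p<2*n. a p) = 1"
  shows "\<forall>k. norm ((\<Sum>i<n. (a i - a (n+i)) *\<^sub>R grad (g i) (x k i))
              - (\<Sum>i<n. (a i + a (n+i)) * wgt n A i) *\<^sub>R
                  grad f (\<Sum>i<n. (a i + a (n+i)) *\<^sub>R x k i))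
           \<le> L * (\<Sum>p<2*n. \<bar>a p\<bar>) *
             (MAX i\<in>{..<n}. norm (x k i - (\<Sum>j<n. (a j + a (n+j)) *\<^sub>R x k j)))"
proof
  fix k
  define y where "y = (\<Sum>j<n. (a j + a (n+j)) *\<^sub>R x k j)"
  define M where "M = (MAX i\<in>{..<n}. norm (x k i - y))"
  have "grad f y = (\<Sum>q<n. A i q *\<^sub>R grad (g q) y)" if "i < n" for i
  proof -
    have "f = (\<lambda>z. \<Sum>q<n. A i q * g q z)"
      using AB that unfolding f_def g_def by (intro ext sum_eq_row_combination) auto
    then show ?thesis
      using g_diff by (simp only:) (rule grad_sum, auto)
  qed
  then have gradient_identity: "(\<Sum>q<n. (a q - a (n+q)) *\<^sub>R grad (g q) y)
      = (\<Sum>i<n. (a i + a (n+i)) * wgt n A i) *\<^sub>R grad f y"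
    using A_sde_left_fixed_halves_diff[OF a_left] by (intro sum_scaleR_column_combination) auto
  have "norm (\<Sum>i<n. (a i - a (n+i)) *\<^sub>R (grad (g i) (x k i) - grad (g i) y))
      \<le> (\<Sum>i<n. \<bar>a i - a (n+i)\<bar>) * (L * M)"
    unfolding M_def using Lip L_pos by (intro norm_sum_scaleR_le_Max) auto
  also have "\<dots> \<le> (\<Sum>p<2*n. \<bar>a p\<bar>) * (L * M)"
  proof (rule mult_right_mono)
    show "(\<Sum>i<n. \<bar>a i - a (n+i)\<bar>) \<le> (\<Sum>p<2*n. \<bar>a p\<bar>)"
      by (simp add: sum_lessThan_double sum.distrib[symmetric] sum_mono abs_triangle_ineq4)
    have "norm (x k 0 - y) \<le> M"
      unfolding M_def using n_pos by simp
    then show "0 \<le> L * M"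
      using L_pos by (simp add: order_trans[OF norm_ge_zero])
  qed
  finally show "norm ((\<Sum>i<n. (a i - a (n+i)) *\<^sub>R grad (g i) (x k i))
      - (\<Sum>i<n. (a i + a (n+i)) * wgt n A i) *\<^sub>R grad f y) \<le> L * (\<Sum>p<2*n. \<bar>a p\<bar>) * M"
    unfolding gradient_identity[symmetric] by (simp add: sum_subtractf scaleR_diff_right mult_ac)
qed

end
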